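(* Let $N,k,s,d$ be positive integers with $s\ge3$, and let $N\ge s+1$ be a prime number. Let $\Lambda\subseteq\mathbb{Z}_N$ belong to the family $\Lambda_d(2k,s)$. Then $$T_k(\Lambda)\le 2^{9k}k^k|\Lambda|^k(s+1)^{2d}\cdot 2^{\frac{2sk(\log k)^2}{\log(k^{2s}|\Lambda|^{s-2})}}.$$
   Context: $\mathbb{Z}_N=\mathbb{Z}/N\mathbb{Z}$; $\log$ is the logarithm to base $2$. For $B\subseteq\mathbb{Z}_N$, $T_k(B)=|\{(r_1,\dots,r_k,r_1',\dots,r_k')\in B^{2k}: r_1+\dots+r_k=r_1'+\dots+r_k'\}|$. Family $\Lambda_d(k,s)$ (for positive integers $k,s,d$): a set $\Lambda=\{\lambda_1,\dots,\lambda_m\}\subseteq\mathbb{Z}_N$ with $\Lambda\cap(-\Lambda)=\emptyset$ belongs to $\Lambda_d(k,s)$ if for every choice of integer vectors $\vec v_1=(v_1^{(1)},\dots,v_1^{(d)}),\dots,\vec v_m=(v_m^{(1)},\dots,v_m^{(d)})\in\mathbb{Z}^d$ with $|v_j^{(i)}|\le s$ for all $i,j$ and $\sum_{j=1}^m|v_j^{(i)}|\le k$ for every $i\in[d]$, satisfying $\lambda_1\vec v_1+\dots+\lambda_m\vec v_m\equiv0\pmod N$ (componentwise), the $d\times m$ matrix $(v_j^{(i)})_{i\in[d],j\in[m]}$ has rank at most $d-1$ (rank of an integer matrix taken over $\mathbb{Q}$). *)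

theory Defs
  imports "HOL-Library.FuncSet" "Jordan_Normal_Form.DL_Rank" Complex_Main
begin

text \<open>Elements of Z_N are represented by their canonical integer representatives
  in the range 0 to N-1. A subset of Z_N is a set of such integers.\<close>

definition zn_set :: "nat \<Rightarrow> int set \<Rightarrow> bool" where
  "zn_set N B \<longleftrightarrow> B \<subseteq> {0..<int N}"

definition T_k :: "nat \<Rightarrow> nat \<Rightarrow> int set \<Rightarrow> nat" where
  "T_k N k B = card {(r, r'). r \<in> {0..<k} \<rightarrow>\<^sub>E B \<and> r' \<in> {0..<k} \<rightarrow>\<^sub>E B \<and>
       (\<Sum>i<k. r i) mod int N = (\<Sum>i<k. r' i) mod int N}"

definition coeff_matrix :: "nat \<Rightarrow> int set \<Rightarrow> (int \<Rightarrow> nat \<Rightarrow> int) \<Rightarrow> rat mat" where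
  "coeff_matrix d Lam v =
     mat d (card Lam) (\<lambda>(i, j). of_int (v (sorted_list_of_set Lam ! j) i))"

definition in_Lambda_family :: "nat \<Rightarrow> nat \<Rightarrow> nat \<Rightarrow> nat \<Rightarrow> int set \<Rightarrow> bool" where
  "in_Lambda_family N d k s Lam \<longleftrightarrow>
     zn_set N Lam \<and>
     (\<forall>x\<in>Lam. (- x) mod int N \<notin> Lam) \<and>
     (\<forall>v :: int \<Rightarrow> nat \<Rightarrow> int.
        ((\<forall>x\<in>Lam. \<forall>i<d. \<bar>v x i\<bar> \<le> int s) \<and>
         (\<forall>i<d. (\<Sum>x\<in>Lam. \<bar>v x i\<bar>) \<le> int k) \<and>
         (\<forall>i<d. (\<Sum>x\<in>Lam. x * v x i) mod int N = 0))
        \<longrightarrow> vec_space.rank d (coeff_matrix d Lam v) \<le> d - 1)"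

end

theory Submission
  imports Defs "Jordan_Normal_Form.DL_Rank_Submatrix" "HOL-Combinatorics.Multiset_Permutations"
begin

(* Let E(Q) be the number of pairs of Lam-valued tuples indexed by Q with equal sums modulo N,
   so that T_k(Lam) = E({..<k}). Call a tuple light if no value occurs in it more than s times.
   For two light tuples with equal sums, the difference of their occurrence counts is a relation
   v on Lam with |v x| <= s, sum |v x| <= 2k and sum x * v x = 0 mod N. The defining property of
   the family says that these relations have rank below d, hence there are at most (2s+1)^(d-1)
   of them, and a light pair is determined by its first tuple, its relation and one of |Q|!
   rearrangements. A heavy tuple repeats some value on s+1 positions, so by Cauchy-Schwarz the
   heavy pairs number at most (binom(|Q|, s+1) |Lam|)^2 E(|Q| - s - 1). If rho >= 1 satisfies
   k^(s+1) <= |Lam|^(s-1) rho^(s+1), induction gives E(n) <= 2 Z n! |Lam|^n (n+1) rho^n with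
   Z = (2s+1)^(d-1), and rho = max 1 (k |Lam|^(-(s-1)/(s+1))) has rho^k bounded as stated. *)

definition collisions :: "('a \<Rightarrow> 'c) \<Rightarrow> 'a set \<Rightarrow> ('b \<Rightarrow> 'c) \<Rightarrow> 'b set \<Rightarrow> nat" where
  "collisions f A g B = card {(a, b). a \<in> A \<and> b \<in> B \<and> f a = g b}"

lemma collisions_eq_sum_fibres:
  assumes "finite A" "finite B" "finite U" "f ` A \<subseteq> U"
  shows "collisions f A g B = (\<Sum>u\<in>U. card {a\<in>A. f a = u} * card {b\<in>B. g b = u})"
proof -
  have "{(a, b). a \<in> A \<and> b \<in> B \<and> f a = g b} = (\<Union>u\<in>U. {a\<in>A. f a = u} \<times> {b\<in>B. g b = u})"
    using assms(4) by auto
  moreover have "card (\<Union>u\<in>U. {a\<in>A. f a = u} \<times> {b\<in>B. g b = u}) =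
      (\<Sum>u\<in>U. card ({a\<in>A. f a = u} \<times> {b\<in>B. g b = u}))"
    by (rule card_UN_disjoint) (use assms in auto)
  ultimately show ?thesis by (simp add: collisions_def card_cartesian_product)
qed

lemma collisions_le_mean:
  assumes "finite A" "finite B"
  shows "2 * collisions f A g B \<le> collisions f A f A + collisions g B g B"
proof -
  define U where "U = f ` A \<union> g ` B"
  have U: "finite U" "f ` A \<subseteq> U" "g ` B \<subseteq> U" using assms by (auto simp: U_def)
  define \<alpha> where "\<alpha> u = card {a\<in>A. f a = u}" for u
  define \<beta> where "\<beta> u = card {b\<in>B. g b = u}" for u
  have "2 * (\<alpha> u * \<beta> u) \<le> \<alpha> u * \<alpha> u + \<beta> u * \<beta> u" for u
  proof -
    have "int (2 * (\<alpha> u * \<beta> u)) \<le> int (\<alpha> u * \<alpha> u + \<beta> u * \<beta> u)"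
      using zero_le_power2[of "int (\<alpha> u) - int (\<beta> u)"] by (simp add: power2_eq_square algebra_simps)
    then show ?thesis by linarith
  qed
  then have "2 * (\<Sum>u\<in>U. \<alpha> u * \<beta> u) \<le> (\<Sum>u\<in>U. \<alpha> u * \<alpha> u) + (\<Sum>u\<in>U. \<beta> u * \<beta> u)"
    unfolding sum_distrib_left sum.distrib[symmetric] by (intro sum_mono)
  then show ?thesis
    using collisions_eq_sum_fibres[OF assms U(1,2), of g] collisions_eq_sum_fibres[OF assms(1,1) U(1,2), of f]
      collisions_eq_sum_fibres[OF assms(2,2) U(1,3), of g]
    by (simp add: \<alpha>_def \<beta>_def)
qed

lemma collisions_mono:
  assumes "A \<subseteq> A'" "B \<subseteq> B'" "finite A'" "finite B'"
  shows "collisions f A g B \<le> collisions f A' g B'"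
  unfolding collisions_def
  by (rule card_mono[OF finite_subset[of _ "A' \<times> B'"]]) (use assms in auto)

lemma collisions_le_split:
  assumes "C \<subseteq> A" "finite A"
  shows "collisions f A f A \<le> 2 * collisions f C f C + 2 * collisions f (A - C) f (A - C)"
proof -
  define P where "P X Y = {(a, b). a \<in> X \<and> b \<in> Y \<and> f a = f b}" for X Y
  have fin: "finite C" "finite (A - C)" using assms finite_subset by auto
  have "P A A = P C C \<union> P C (A - C) \<union> P (A - C) C \<union> P (A - C) (A - C)"
    using assms(1) by (auto simp: P_def)
  then have "card (P A A) \<le> card (P C C \<union> P C (A - C) \<union> P (A - C) C) + card (P (A - C) (A - C))"
    by (simp only: card_Un_le)
  moreover have "card (P C C \<union> P C (A - C) \<union> P (A - C) C) \<le> card (P C C \<union> P C (A - C)) + card (P (A - C) C)"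
    by (rule card_Un_le)
  moreover have "card (P C C \<union> P C (A - C)) \<le> card (P C C) + card (P C (A - C))"
    by (rule card_Un_le)
  moreover have "2 * collisions f C f (A - C) \<le> collisions f C f C + collisions f (A - C) f (A - C)"
    by (rule collisions_le_mean[OF fin])
  moreover have "2 * collisions f (A - C) f C \<le> collisions f (A - C) f (A - C) + collisions f C f C"
    by (rule collisions_le_mean[OF fin(2,1)])
  ultimately show ?thesis unfolding collisions_def P_def by linarith
qed

lemma collisions_UN_image_le:
  assumes "finite I" "\<And>p. p \<in> I \<Longrightarrow> finite (A p)"
  shows "collisions f (\<Union>p\<in>I. h p ` A p) f (\<Union>p\<in>I. h p ` A p)
    \<le> (\<Sum>p\<in>I. \<Sum>q\<in>I. collisions (f \<circ> h p) (A p) (f \<circ> h q) (A q))"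
proof -
  define E where "E p q = (\<lambda>(a, b). (h p a, h q b)) ` {(a, b). a \<in> A p \<and> b \<in> A q \<and> f (h p a) = f (h q b)}" for p q
  have fin: "finite {(a, b). a \<in> A p \<and> b \<in> A q \<and> f (h p a) = f (h q b)}" if "p \<in> I" "q \<in> I" for p q
    by (rule finite_subset[of _ "A p \<times> A q"]) (use assms that in auto)
  have "{(a, b). a \<in> (\<Union>p\<in>I. h p ` A p) \<and> b \<in> (\<Union>p\<in>I. h p ` A p) \<and> f a = f b} \<subseteq> (\<Union>p\<in>I. \<Union>q\<in>I. E p q)"
  proof clarify
    fix p q a b assume "p \<in> I" "a \<in> A p" "q \<in> I" "b \<in> A q" "f (h p a) = f (h q b)"
    then have "(h p a, h q b) \<in> E p q" unfolding E_def by (intro image_eqI[of _ _ "(a, b)"]) auto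
    with \<open>p \<in> I\<close> \<open>q \<in> I\<close> show "(h p a, h q b) \<in> (\<Union>p\<in>I. \<Union>q\<in>I. E p q)" by blast
  qed
  then have "collisions f (\<Union>p\<in>I. h p ` A p) f (\<Union>p\<in>I. h p ` A p) \<le> card (\<Union>p\<in>I. \<Union>q\<in>I. E p q)"
    unfolding collisions_def by (rule card_mono[rotated]) (use assms(1) fin in \<open>simp add: E_def\<close>)
  also have "\<dots> \<le> (\<Sum>p\<in>I. card (\<Union>q\<in>I. E p q))" by (rule card_UN_le[OF assms(1)])
  also have "\<dots> \<le> (\<Sum>p\<in>I. \<Sum>q\<in>I. card (E p q))" by (intro sum_mono card_UN_le[OF assms(1)])
  also have "\<dots> \<le> (\<Sum>p\<in>I. \<Sum>q\<in>I. collisions (f \<circ> h p) (A p) (f \<circ> h q) (A q))"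
    unfolding E_def collisions_def comp_def by (intro sum_mono card_image_le fin)
  finally show ?thesis .
qed

definition occurrences :: "'i set \<Rightarrow> ('i \<Rightarrow> 'a) \<Rightarrow> 'a \<Rightarrow> nat" where
  "occurrences Q r x = card {i\<in>Q. r i = x}"

lemma count_image_mset_mset_set:
  assumes "finite Q"
  shows "count (image_mset r (mset_set Q)) x = occurrences Q r x"
proof -
  have "count (image_mset r (mset_set Q)) x = (\<Sum>i\<in>r -` {x} \<inter> Q. 1)"
    using assms by (simp add: count_image_mset)
  also have "r -` {x} \<inter> Q = {i\<in>Q. r i = x}" by auto
  finally show ?thesis by (simp add: occurrences_def)
qed

text \<open>Such tuples are the arrangements of one multiset of values along the positions.\<close>
lemma card_PiE_occurrences_eq_le_fact:
  assumes "finite Q"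
  shows "card {r \<in> Q \<rightarrow>\<^sub>E A. occurrences Q r = c} \<le> fact (card Q)"
proof (cases "{r \<in> Q \<rightarrow>\<^sub>E A. occurrences Q r = c} = {}")
  case False
  define F where "F = {r \<in> Q \<rightarrow>\<^sub>E A. occurrences Q r = c}"
  obtain r0 where r0: "r0 \<in> F" using False by (auto simp: F_def)
  obtain xs where xs: "distinct xs" "set xs = Q" using finite_distinct_list[OF assms] by blast
  define M where "M = image_mset r0 (mset_set Q)"
  have "inj_on (\<lambda>r. map r xs) F"
  proof (rule inj_onI)
    fix r r' assume "r \<in> F" "r' \<in> F" "map r xs = map r' xs"
    then show "r = r'" using xs(2) by (intro PiE_ext[of r Q "\<lambda>_. A" r']) (auto simp: F_def map_eq_conv)
  qed
  moreover have "(\<lambda>r. map r xs) ` F \<subseteq> permutations_of_multiset M"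
  proof (clarify intro!: permutations_of_multisetI)
    fix r assume "r \<in> F"
    then have "occurrences Q r = occurrences Q r0" using r0 by (simp add: F_def)
    then have "image_mset r (mset_set Q) = M"
      by (intro multiset_eqI) (simp add: M_def count_image_mset_mset_set[OF assms])
    then show "mset (map r xs) = M" using xs by (simp add: mset_set_set[symmetric])
  qed
  ultimately have "card F \<le> card (permutations_of_multiset M)"
    by (intro card_inj_on_le) simp_all
  also have "\<dots> \<le> fact (size M)" by (simp add: card_permutations_of_multiset div_le_dividend)
  also have "size M = card Q" by (simp add: M_def)
  finally show ?thesis by (simp add: F_def)
qed (simp only: card.empty le0)

lemma sum_occurrences:
  assumes "r \<in> Q \<rightarrow>\<^sub>E L" "finite Q" "finite L"
  shows "(\<Sum>x\<in>L. occurrences Q r x) = card Q"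
  using sum.group[of Q L r "\<lambda>_. 1::nat"] assms by (auto simp: occurrences_def)

lemma sum_mult_occurrences:
  fixes r :: "'i \<Rightarrow> 'a::comm_semiring_1"
  assumes "r \<in> Q \<rightarrow>\<^sub>E L" "finite Q" "finite L"
  shows "(\<Sum>x\<in>L. x * of_nat (occurrences Q r x)) = (\<Sum>i\<in>Q. r i)"
proof -
  have "(\<Sum>i | i \<in> Q \<and> r i = x. r i) = x * of_nat (occurrences Q r x)" for x
    by (simp add: occurrences_def mult.commute)
  then show ?thesis using sum.group[of Q L r r] assms by auto
qed

definition independent_on :: "'a set \<Rightarrow> (nat \<Rightarrow> 'a \<Rightarrow> int) \<Rightarrow> nat \<Rightarrow> bool" where
  "independent_on J ws n \<longleftrightarrow>
     (\<forall>c::nat \<Rightarrow> rat. (\<forall>x\<in>J. (\<Sum>i<n. c i * of_int (ws i x)) = 0) \<longrightarrow> (\<forall>i<n. c i = 0))"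

text \<open>The vectors in S, restricted to the coordinates in L, span a space of dimension less
  than d. It is phrased through the vanishing of all d by d minors, which is the form in which it
  follows from the rank condition of the family.\<close>
definition rank_less_on :: "'a set \<Rightarrow> nat \<Rightarrow> ('a \<Rightarrow> int) set \<Rightarrow> bool" where
  "rank_less_on L d S \<longleftrightarrow>
     (\<forall>ws J. (\<forall>i<d. ws i \<in> S) \<longrightarrow> J \<subseteq> L \<longrightarrow> card J = d \<longrightarrow> \<not> independent_on J ws d)"

definition box_on :: "'a set \<Rightarrow> nat \<Rightarrow> ('a \<Rightarrow> int) set" where
  "box_on L s = {w. \<forall>x. (x \<in> L \<longrightarrow> w x \<in> {-int s..int s}) \<and> (x \<notin> L \<longrightarrow> w x = 0)}"

lemma finite_box_on: "finite L \<Longrightarrow> finite (box_on L s)"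
  unfolding box_on_def by (rule finite_set_of_finite_funs) simp_all

lemma rank_less_on_pos: "rank_less_on L d S \<Longrightarrow> d > 0"
  unfolding rank_less_on_def independent_on_def by (cases d) auto

lemma independent_on_mono: "independent_on J ws n \<Longrightarrow> J \<subseteq> J' \<Longrightarrow> independent_on J' ws n"
  unfolding independent_on_def by blast

lemma independent_on_cong:
  assumes "\<And>i x. i < n \<Longrightarrow> x \<in> J \<Longrightarrow> ws i x = ws' i x"
  shows "independent_on J ws n = independent_on J ws' n"
proof -
  have "(\<Sum>i<n. c i * of_int (ws i x)) = (\<Sum>i<n. c i * of_int (ws' i x))" if "x \<in> J" for c :: "nat \<Rightarrow> rat" and x
    using assms that by (intro sum.cong) auto
  then show ?thesis unfolding independent_on_def by (simp cong: ball_cong)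
qed

lemma rank_less_on_image:
  assumes "rank_less_on L' d S" "L \<subseteq> L'" "\<And>w x. w \<in> S \<Longrightarrow> x \<in> L \<Longrightarrow> f w x = w x"
  shows "rank_less_on L d (f ` S)"
  unfolding rank_less_on_def
proof (intro allI impI)
  fix ws J assume ws: "\<forall>i<d. ws i \<in> f ` S" and J: "J \<subseteq> L" "card J = d"
  obtain vs where vs: "\<forall>i\<in>{..<d}. vs i \<in> S \<and> ws i = f (vs i)"
    using bchoice[of "{..<d}" "\<lambda>i v. v \<in> S \<and> ws i = f v"] ws by blast
  have "independent_on J ws d = independent_on J vs d"
    using vs J(1) assms(3) by (intro independent_on_cong) auto
  moreover have "\<not> independent_on J vs d"
    using assms(1,2) vs J unfolding rank_less_on_def by blast
  ultimately show "\<not> independent_on J ws d" by simp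
qed

lemma lincomb_if_dependent:
  assumes "independent_on J ws r" "\<not> independent_on J (ws(r := w)) (Suc r)"
  shows "\<exists>\<beta>::nat \<Rightarrow> rat. \<forall>x\<in>J. of_int (w x) = (\<Sum>i<r. \<beta> i * of_int (ws i x))"
proof -
  obtain c :: "nat \<Rightarrow> rat" where c0: "\<forall>x\<in>J. (\<Sum>i<Suc r. c i * of_int ((ws(r := w)) i x)) = 0"
    and c: "\<exists>i<Suc r. c i \<noteq> 0"
    using assms(2) unfolding independent_on_def by blast
  have upd: "(\<Sum>i<r. c i * of_int ((ws(r := w)) i x)) = (\<Sum>i<r. c i * of_int (ws i x))" for x
    by (intro sum.cong) auto
  have c0': "(\<Sum>i<r. c i * of_int (ws i x)) + c r * of_int (w x) = 0" if "x \<in> J" for x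
    using bspec[OF c0 that] unfolding sum.lessThan_Suc upd by simp
  have "c r \<noteq> 0"
  proof
    assume "c r = 0"
    then have "\<forall>x\<in>J. (\<Sum>i<r. c i * of_int (ws i x)) = 0" using c0' by simp
    then have "\<forall>i<r. c i = 0" using assms(1) unfolding independent_on_def by blast
    with \<open>c r = 0\<close> have "\<forall>i<Suc r. c i = 0" by (simp add: less_Suc_eq)
    with c show False by blast
  qed
  have "of_int (w x) = (\<Sum>i<r. (- c i / c r) * of_int (ws i x))" if "x \<in> J" for x
  proof -
    have "of_int (w x) = (c r * of_int (w x)) / c r" using \<open>c r \<noteq> 0\<close> by simp
    also have "\<dots> = - (\<Sum>i<r. c i * of_int (ws i x)) / c r"
      using c0'[OF that] by (simp add: add_eq_0_iff)
    also have "\<dots> = (\<Sum>i<r. (- c i / c r) * of_int (ws i x))"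
      by (simp add: sum_divide_distrib flip: sum_negf)
    finally show ?thesis .
  qed
  then show ?thesis by (intro exI[of _ "\<lambda>i. - c i / c r"]) blast
qed

lemma independent_on_coeffs_eq:
  fixes \<beta> \<beta>' :: "nat \<Rightarrow> rat"
  assumes "independent_on J ws r"
    and "\<And>x. x \<in> J \<Longrightarrow> (\<Sum>i<r. \<beta> i * of_int (ws i x)) = (\<Sum>i<r. \<beta>' i * of_int (ws i x))"
    and "i < r"
  shows "\<beta> i = \<beta>' i"
proof -
  have "(\<Sum>i<r. (\<beta> i - \<beta>' i) * of_int (ws i x)) = 0" if "x \<in> J" for x
    using assms(2)[OF that] by (simp add: left_diff_distrib sum_subtractf)
  then have "\<forall>i<r. \<beta> i - \<beta>' i = 0"
    using assms(1)[unfolded independent_on_def, rule_format, of "\<lambda>i. \<beta> i - \<beta>' i"] by blast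
  with assms(3) show ?thesis by simp
qed

lemma inj_on_fun_upd_if_independent:
  assumes "finite L" "a \<notin> L" "rank_less_on (insert a L) (Suc r) S"
    and "\<forall>i<r. ws i \<in> S" "J \<subseteq> L" "card J = r" "independent_on J ws r"
  shows "inj_on (\<lambda>w. w(a := 0)) S"
proof (rule inj_onI)
  fix w w' assume w: "w \<in> S" "w' \<in> S" and eq: "w(a := 0) = w'(a := 0)"
  define J' where "J' = insert a J"
  have "finite J" "a \<notin> J" using assms(1,2,5) finite_subset by auto
  then have J': "J' \<subseteq> insert a L" "card J' = Suc r" using assms(5,6) by (auto simp: J'_def)
  have indep: "independent_on J' ws r" using assms(7) by (rule independent_on_mono) (auto simp: J'_def)
  have "\<not> independent_on J' (ws(r := v)) (Suc r)" if "v \<in> S" for v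
  proof -
    have "\<forall>i<Suc r. (ws(r := v)) i \<in> S" using assms(4) that by (simp add: less_Suc_eq)
    then show ?thesis using assms(3) J' unfolding rank_less_on_def by blast
  qed
  then have ex: "\<exists>\<beta>::nat \<Rightarrow> rat. \<forall>x\<in>J'. of_int (v x) = (\<Sum>i<r. \<beta> i * of_int (ws i x))"
    if "v \<in> S" for v
    using lincomb_if_dependent[OF indep] that by blast
  obtain \<beta> :: "nat \<Rightarrow> rat" where \<beta>: "\<forall>x\<in>J'. of_int (w x) = (\<Sum>i<r. \<beta> i * of_int (ws i x))"
    using ex[OF w(1)] by blast
  obtain \<beta>' :: "nat \<Rightarrow> rat" where \<beta>': "\<forall>x\<in>J'. of_int (w' x) = (\<Sum>i<r. \<beta>' i * of_int (ws i x))"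
    using ex[OF w(2)] by blast
  have agree: "w x = w' x" if "x \<noteq> a" for x using fun_cong[OF eq, of x] that by simp
  have "(\<Sum>i<r. \<beta> i * of_int (ws i x)) = (\<Sum>i<r. \<beta>' i * of_int (ws i x))" if "x \<in> J" for x
  proof -
    have "x \<in> J'" "x \<noteq> a" using that assms(2,5) by (auto simp: J'_def)
    then show ?thesis using bspec[OF \<beta>, of x] bspec[OF \<beta>', of x] agree[of x] by simp
  qed
  then have "(\<Sum>i<r. \<beta> i * of_int (ws i a)) = (\<Sum>i<r. \<beta>' i * of_int (ws i a))"
    using independent_on_coeffs_eq[OF assms(7)] by (intro sum.cong) auto
  then have "w a = w' a" using \<beta> \<beta>' by (simp add: J'_def)
  show "w = w'"
  proof
    fix x show "w x = w' x" using agree \<open>w a = w' a\<close> by (cases "x = a") auto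
  qed
qed

lemma card_le_card_image_fun_upd_mult:
  assumes "finite ((\<lambda>w. w(a := 0)) ` S)" "\<And>w. w \<in> S \<Longrightarrow> w a \<in> {-int s..int s}"
  shows "card S \<le> card ((\<lambda>w. w(a := 0)) ` S) * (2 * s + 1)"
proof -
  let ?S' = "(\<lambda>w. w(a := 0)) ` S"
  have "S \<subseteq> (\<lambda>(u, j). u(a := j)) ` (?S' \<times> {-int s..int s})"
  proof
    fix w assume "w \<in> S"
    then have "(w(a := 0), w a) \<in> ?S' \<times> {-int s..int s}" using assms(2) by blast
    then show "w \<in> (\<lambda>(u, j). u(a := j)) ` (?S' \<times> {-int s..int s})" by (rule image_eqI[rotated]) simp
  qed
  then have "card S \<le> card ((\<lambda>(u, j). u(a := j)) ` (?S' \<times> {-int s..int s}))"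
    using assms(1) by (intro card_mono) simp_all
  also have "\<dots> \<le> card (?S' \<times> {-int s..int s})" by (rule card_image_le) (use assms(1) in simp)
  also have "\<dots> = card ?S' * (2 * s + 1)"
  proof -
    have "card {-int s..int s} = 2 * s + 1" by simp
    then show ?thesis by (simp add: card_cartesian_product)
  qed
  finally show ?thesis .
qed

text \<open>Induction on L: forgetting one coordinate either is injective on S and keeps the rank
  below Suc r, or lowers the rank below r at the price of a factor 2 s + 1.\<close>
lemma card_le_if_rank_less_on:
  assumes "finite L" "S \<subseteq> box_on L s" "rank_less_on L (Suc r) S"
  shows "card S \<le> (2 * s + 1) ^ r"
  using assms
proof (induction L arbitrary: r S rule: finite_induct)
  case empty
  then have "S \<subseteq> {\<lambda>_. 0}" by (auto simp: box_on_def)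
  then have "card S \<le> 1" using card_mono[of "{\<lambda>_. 0}" S] by simp
  then show ?case using one_le_power[of "2 * s + 1" r] by linarith
next
  case (insert a L)
  define \<pi> where "\<pi> w = w(a := 0)" for w :: "'a \<Rightarrow> int"
  have \<pi>S: "\<pi> ` S \<subseteq> box_on L s" using insert.prems(1) by (auto simp: \<pi>_def box_on_def)
  have finS: "finite (\<pi> ` S)" using finite_box_on[OF insert.hyps(1)] \<pi>S finite_subset by blast
  have agree: "\<pi> w x = w x" if "x \<in> L" for w x using that insert.hyps(2) by (auto simp: \<pi>_def)
  show ?case
  proof (cases "\<exists>ws J. (\<forall>i<r. ws i \<in> S) \<and> J \<subseteq> L \<and> card J = r \<and> independent_on J ws r")
    case True
    then obtain ws J where "\<forall>i<r. ws i \<in> S" "J \<subseteq> L" "card J = r" "independent_on J ws r"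
      by blast
    then have "inj_on \<pi> S"
      unfolding \<pi>_def using insert.hyps insert.prems(2) by (intro inj_on_fun_upd_if_independent)
    moreover have "rank_less_on L (Suc r) (\<pi> ` S)"
      by (rule rank_less_on_image[OF insert.prems(2)]) (auto simp: agree)
    ultimately show ?thesis using insert.IH[OF \<pi>S] by (simp add: card_image)
  next
    case False
    then have rank: "rank_less_on L r S" unfolding rank_less_on_def by blast
    then obtain r' where r: "r = Suc r'" using rank_less_on_pos gr0_implies_Suc by blast
    have "rank_less_on L (Suc r') (\<pi> ` S)"
      using rank unfolding r by (rule rank_less_on_image) (auto simp: agree)
    then have IH: "card (\<pi> ` S) \<le> (2 * s + 1) ^ r'" using insert.IH[OF \<pi>S] by blast
    have "card S \<le> card (\<pi> ` S) * (2 * s + 1)"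
      unfolding \<pi>_def using insert.prems(1) finS
      by (intro card_le_card_image_fun_upd_mult) (auto simp: \<pi>_def box_on_def)
    also have "\<dots> \<le> (2 * s + 1) ^ r' * (2 * s + 1)" by (rule mult_le_mono1[OF IH])
    also have "\<dots> = (2 * s + 1) ^ r" by (simp add: r)
    finally show ?thesis .
  qed
qed

lemma left_kernel_on_columns_if_rank_less:
  fixes A :: "'a::field mat"
  assumes A: "A \<in> carrier_mat n m" and rank: "vec_space.rank n A < n"
    and J: "J \<subseteq> {..<m}" "card J = n"
  shows "\<exists>y. (\<exists>i<n. y i \<noteq> 0) \<and> (\<forall>j\<in>J. (\<Sum>i<n. y i * A $$ (i, j)) = 0)"
proof -
  define B where "B = submatrix A UNIV J"
  have "{j. j < m \<and> j \<in> J} = J" using J(1) by auto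
  then have cardJ: "card {j. j < m \<and> j \<in> J} = n" using J(2) by (simp only:)
  have "dim_row B = n" using A unfolding B_def dim_submatrix(1) by simp
  moreover have "dim_col B = n" using A cardJ unfolding B_def dim_submatrix(2) by simp
  ultimately have B: "B \<in> carrier_mat n n" by (rule carrier_matI)
  have "det B = 0"
    using vec_space.rank_gt_minor[OF A, of UNIV J] cardJ rank unfolding B_def by linarith
  then obtain v where v: "v \<in> carrier_vec n" "v \<noteq> 0\<^sub>v n" "transpose_mat B *\<^sub>v v = 0\<^sub>v n"
    using det_0_iff_vec_prod_zero_field[of "transpose_mat B" n] B by (auto simp: det_transpose)
  have "(\<Sum>i<n. v $ i * A $$ (i, j)) = 0" if j: "j \<in> J" for j
  proof -
    define k where "k = card {a\<in>J. a < j}"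
    have "finite J" using J(1) finite_subset by blast
    moreover have "{a\<in>J. a < j} \<subset> J" using j by auto
    ultimately have "k < n" unfolding k_def using J(2) psubset_card_mono by metis
    have Bk: "B $$ (i, k) = A $$ (i, j)" if "i < n" for i
      using submatrix_index_card[of i A j UNIV J] A that j J(1) by (auto simp: B_def k_def)
    have "0 = (transpose_mat B *\<^sub>v v) $ k" using v(3) \<open>k < n\<close> by simp
    also have "\<dots> = (\<Sum>i<n. B $$ (i, k) * v $ i)"
      using B v(1) \<open>k < n\<close> by (simp add: scalar_prod_def atLeast0LessThan)
    also have "\<dots> = (\<Sum>i<n. v $ i * A $$ (i, j))" by (intro sum.cong) (simp_all add: Bk)
    finally show ?thesis by simp
  qed
  moreover have "\<exists>i<n. v $ i \<noteq> 0" using v(1,2) by (auto simp: vec_eq_iff)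
  ultimately show ?thesis by (intro exI[of _ "\<lambda>i. v $ i"]) blast
qed

text \<open>The coefficient vectors admitted in the definition of the family, as functions on L.\<close>
definition small_relations :: "nat \<Rightarrow> nat \<Rightarrow> nat \<Rightarrow> int set \<Rightarrow> (int \<Rightarrow> int) set" where
  "small_relations N K s L =
     {v \<in> box_on L s. (\<Sum>x\<in>L. \<bar>v x\<bar>) \<le> int K \<and> (\<Sum>x\<in>L. x * v x) mod int N = 0}"

lemma finite_if_in_Lambda_family: "in_Lambda_family N d K s Lam \<Longrightarrow> finite Lam"
  unfolding in_Lambda_family_def zn_set_def using finite_subset by blast

lemma nth_positions_of_subset:
  assumes "distinct xs" "J \<subseteq> set xs"
  shows "nth xs ` {j. j < length xs \<and> xs ! j \<in> J} = J"
    and "card {j. j < length xs \<and> xs ! j \<in> J} = card J"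
proof -
  show image: "nth xs ` {j. j < length xs \<and> xs ! j \<in> J} = J"
  proof
    show "nth xs ` {j. j < length xs \<and> xs ! j \<in> J} \<subseteq> J" by auto
    show "J \<subseteq> nth xs ` {j. j < length xs \<and> xs ! j \<in> J}"
    proof
      fix x assume "x \<in> J"
      then have "x \<in> set xs" using assms(2) by blast
      then obtain j where "j < length xs" "xs ! j = x" by (auto simp: in_set_conv_nth)
      then show "x \<in> nth xs ` {j. j < length xs \<and> xs ! j \<in> J}"
        using \<open>x \<in> J\<close> by (intro image_eqI[of _ _ j]) auto
    qed
  qed
  have "inj_on (nth xs) {j. j < length xs \<and> xs ! j \<in> J}"
    using assms(1) by (rule inj_on_nth) simp
  then show "card {j. j < length xs \<and> xs ! j \<in> J} = card J"
    using image card_image by fastforce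
qed

lemma rank_less_on_small_relations:
  assumes fam: "in_Lambda_family N d K s Lam" and "d \<ge> 1"
  shows "rank_less_on Lam d (small_relations N K s Lam)"
  unfolding rank_less_on_def
proof (intro allI impI)
  fix ws J assume ws: "\<forall>i<d. ws i \<in> small_relations N K s Lam" and J: "J \<subseteq> Lam" "card J = d"
  define v where "v x i = ws i x" for x i
  define xs where "xs = sorted_list_of_set Lam"
  define m where "m = card Lam"
  define A where "A = coeff_matrix d Lam v"
  have xs: "distinct xs" "set xs = Lam" "length xs = m"
    using finite_if_in_Lambda_family[OF fam] by (auto simp: xs_def m_def)
  have "\<bar>v x i\<bar> \<le> int s" if "x \<in> Lam" "i < d" for x i
  proof -
    have "ws i x \<in> {-int s..int s}" using ws that unfolding small_relations_def box_on_def by blast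
    then show ?thesis by (simp add: v_def abs_le_iff)
  qed
  moreover have "\<forall>i<d. (\<Sum>x\<in>Lam. \<bar>v x i\<bar>) \<le> int K" "\<forall>i<d. (\<Sum>x\<in>Lam. x * v x i) mod int N = 0"
    using ws by (auto simp: v_def small_relations_def)
  ultimately have "vec_space.rank d A \<le> d - 1"
    using fam[unfolded in_Lambda_family_def, THEN conjunct2, THEN conjunct2, rule_format, of v]
    by (simp add: A_def)
  then have rank: "vec_space.rank d A < d" using assms(2) by linarith
  have A: "A \<in> carrier_mat d m" by (simp add: A_def coeff_matrix_def m_def)
  have A_entry: "A $$ (i, j) = of_int (ws i (xs ! j))" if "i < d" "j < m" for i j
    using that by (simp add: A_def coeff_matrix_def m_def xs_def v_def)
  define J' where "J' = {j. j < m \<and> xs ! j \<in> J}"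
  have J': "nth xs ` J' = J" "card J' = d"
    using nth_positions_of_subset[OF xs(1), of J] J xs(2,3) by (simp_all add: J'_def)
  obtain y where y: "\<exists>i<d. y i \<noteq> 0" "\<forall>j\<in>J'. (\<Sum>i<d. y i * A $$ (i, j)) = 0"
    using left_kernel_on_columns_if_rank_less[OF A rank, of J'] J'(2) by (auto simp: J'_def)
  have "(\<Sum>i<d. y i * of_int (ws i x)) = 0" if "x \<in> J" for x
  proof -
    obtain j where j: "j \<in> J'" "x = xs ! j" using J'(1) \<open>x \<in> J\<close> by blast
    then have "(\<Sum>i<d. y i * of_int (ws i x)) = (\<Sum>i<d. y i * A $$ (i, j))"
      by (intro sum.cong) (auto simp: A_entry J'_def)
    then show ?thesis using y(2) j(1) by simp
  qed
  then show "\<not> independent_on J ws d" using y(1) unfolding independent_on_def by blast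
qed

lemma card_small_relations_le:
  assumes "in_Lambda_family N d K s Lam" "d \<ge> 1"
  shows "card (small_relations N K s Lam) \<le> (2 * s + 1) ^ (d - 1)"
proof (rule card_le_if_rank_less_on)
  show "finite Lam" using finite_if_in_Lambda_family[OF assms(1)] .
  show "small_relations N K s Lam \<subseteq> box_on Lam s" by (auto simp: small_relations_def)
  show "rank_less_on Lam (Suc (d - 1)) (small_relations N K s Lam)"
    using rank_less_on_small_relations[OF assms] assms(2) by simp
qed

definition sum_mod :: "nat \<Rightarrow> 'i set \<Rightarrow> ('i \<Rightarrow> int) \<Rightarrow> int" where
  "sum_mod N Q r = (\<Sum>i\<in>Q. r i) mod int N"

definition energy :: "nat \<Rightarrow> int set \<Rightarrow> 'i set \<Rightarrow> nat" where
  "energy N L Q = collisions (sum_mod N Q) (Q \<rightarrow>\<^sub>E L) (sum_mod N Q) (Q \<rightarrow>\<^sub>E L)"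

lemma T_k_eq_energy: "T_k N k L = energy N L {..<k}"
  unfolding T_k_def energy_def collisions_def sum_mod_def by (simp add: atLeast0LessThan)

definition light_tuples :: "nat \<Rightarrow> 'i set \<Rightarrow> int set \<Rightarrow> ('i \<Rightarrow> int) set" where
  "light_tuples s Q L = {r \<in> Q \<rightarrow>\<^sub>E L. \<forall>x. occurrences Q r x \<le> s}"

lemma occurrences_eq_0_if_notin: "r \<in> Q \<rightarrow>\<^sub>E L \<Longrightarrow> x \<notin> L \<Longrightarrow> occurrences Q r x = 0"
  unfolding occurrences_def by (auto simp: card_eq_0_iff)

lemma occurrences_diff_in_small_relations:
  assumes r: "r \<in> light_tuples s Q L" and r': "r' \<in> light_tuples s Q L"
    and fin: "finite Q" "finite L" and "card Q \<le> k" and eq: "sum_mod N Q r = sum_mod N Q r'"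
  shows "(\<lambda>x. int (occurrences Q r x) - int (occurrences Q r' x)) \<in> small_relations N (2 * k) s L"
proof -
  have rQ: "r \<in> Q \<rightarrow>\<^sub>E L" "r' \<in> Q \<rightarrow>\<^sub>E L" using r r' by (auto simp: light_tuples_def)
  have "int (occurrences Q r x) - int (occurrences Q r' x) \<in> {-int s..int s}" for x
  proof -
    have "occurrences Q r x \<le> s" "occurrences Q r' x \<le> s" using r r' by (auto simp: light_tuples_def)
    then show ?thesis by simp
  qed
  then have box: "(\<lambda>x. int (occurrences Q r x) - int (occurrences Q r' x)) \<in> box_on L s"
    using occurrences_eq_0_if_notin[OF rQ(1)] occurrences_eq_0_if_notin[OF rQ(2)] by (simp add: box_on_def)
  have "(\<Sum>x\<in>L. \<bar>int (occurrences Q r x) - int (occurrences Q r' x)\<bar>) \<le> (\<Sum>x\<in>L. int (occurrences Q r x) + int (occurrences Q r' x))"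
    by (intro sum_mono) linarith
  also have "\<dots> = int (card Q) + int (card Q)"
    using sum_occurrences[OF rQ(1) fin] sum_occurrences[OF rQ(2) fin] by (simp add: sum.distrib flip: of_nat_sum)
  also have "\<dots> \<le> int (2 * k)" using \<open>card Q \<le> k\<close> by simp
  finally have weight: "(\<Sum>x\<in>L. \<bar>int (occurrences Q r x) - int (occurrences Q r' x)\<bar>) \<le> int (2 * k)" .
  have "(\<Sum>x\<in>L. x * (int (occurrences Q r x) - int (occurrences Q r' x))) = (\<Sum>i\<in>Q. r i) - (\<Sum>i\<in>Q. r' i)"
    using sum_mult_occurrences[OF rQ(1) fin] sum_mult_occurrences[OF rQ(2) fin]
    by (simp add: right_diff_distrib sum_subtractf)
  then have "(\<Sum>x\<in>L. x * (int (occurrences Q r x) - int (occurrences Q r' x))) mod int N = 0"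
    using eq by (simp add: sum_mod_def mod_eq_dvd_iff)
  with box weight show ?thesis by (simp add: small_relations_def)
qed

text \<open>A light pair with equal sums is determined by its first tuple, the difference of the
  occurrence counts (a small relation) and an arrangement of the second tuple.\<close>
lemma collisions_light_tuples_le:
  assumes fin: "finite Q" "finite L" and "card Q \<le> k"
  shows "collisions (sum_mod N Q) (light_tuples s Q L) (sum_mod N Q) (light_tuples s Q L)
    \<le> card L ^ card Q * card (small_relations N (2 * k) s L) * fact (card Q)"
proof -
  define S where "S = small_relations N (2 * k) s L"
  define F where "F r v = {r' \<in> Q \<rightarrow>\<^sub>E L. occurrences Q r' = (\<lambda>x. nat (int (occurrences Q r x) - v x))}" for r v
  have finS: "finite S"
    using finite_box_on[OF fin(2)] by (rule finite_subset[rotated]) (auto simp: S_def small_relations_def)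
  have finPiE: "finite (Q \<rightarrow>\<^sub>E L)" using fin by (simp add: finite_PiE)
  have finF: "finite (F r v)" for r v using finPiE by (simp add: F_def)
  have "{(r, r'). r \<in> light_tuples s Q L \<and> r' \<in> light_tuples s Q L \<and> sum_mod N Q r = sum_mod N Q r'}
      \<subseteq> (\<Union>r\<in>Q \<rightarrow>\<^sub>E L. \<Union>v\<in>S. {r} \<times> F r v)"
  proof clarify
    fix r r' assume r: "r \<in> light_tuples s Q L" and r': "r' \<in> light_tuples s Q L"
      and eq: "sum_mod N Q r = sum_mod N Q r'"
    define v where "v x = int (occurrences Q r x) - int (occurrences Q r' x)" for x
    have "v \<in> S" unfolding v_def S_def by (rule occurrences_diff_in_small_relations) fact+
    moreover have "r' \<in> F r v" using r' by (auto simp: F_def v_def light_tuples_def)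
    moreover have "r \<in> Q \<rightarrow>\<^sub>E L" using r by (simp add: light_tuples_def)
    ultimately show "(r, r') \<in> (\<Union>r\<in>Q \<rightarrow>\<^sub>E L. \<Union>v\<in>S. {r} \<times> F r v)"
      by (intro UN_I[of r] UN_I[of v]) simp_all
  qed
  then have "collisions (sum_mod N Q) (light_tuples s Q L) (sum_mod N Q) (light_tuples s Q L)
      \<le> card (\<Union>r\<in>Q \<rightarrow>\<^sub>E L. \<Union>v\<in>S. {r} \<times> F r v)"
    unfolding collisions_def by (rule card_mono[rotated]) (simp add: finPiE finS finF)
  also have "\<dots> \<le> (\<Sum>r\<in>Q \<rightarrow>\<^sub>E L. card (\<Union>v\<in>S. {r} \<times> F r v))" by (rule card_UN_le[OF finPiE])
  also have "\<dots> \<le> (\<Sum>r\<in>Q \<rightarrow>\<^sub>E L. \<Sum>v\<in>S. card ({r} \<times> F r v))"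
    by (intro sum_mono card_UN_le[OF finS])
  also have "\<dots> \<le> (\<Sum>r\<in>Q \<rightarrow>\<^sub>E L. \<Sum>v\<in>S. fact (card Q))"
    unfolding F_def by (intro sum_mono) (simp add: card_cartesian_product card_PiE_occurrences_eq_le_fact fin)
  also have "\<dots> = card L ^ card Q * card S * fact (card Q)" using fin by (simp add: card_PiE)
  finally show ?thesis by (simp add: S_def)
qed

lemma sum_override_on_const:
  fixes a :: "'i \<Rightarrow> 'a::comm_semiring_1"
  assumes "finite Q" "P \<subseteq> Q"
  shows "(\<Sum>i\<in>Q. override_on a (\<lambda>_. x) P i) = of_nat (card P) * x + (\<Sum>i\<in>Q - P. a i)"
proof -
  have "(\<Sum>i\<in>Q. override_on a (\<lambda>_. x) P i)
      = (\<Sum>i\<in>Q - P. override_on a (\<lambda>_. x) P i) + (\<Sum>i\<in>P. override_on a (\<lambda>_. x) P i)"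
    by (rule sum.subset_diff[OF assms(2,1)])
  also have "(\<Sum>i\<in>Q - P. override_on a (\<lambda>_. x) P i) = (\<Sum>i\<in>Q - P. a i)"
    by (intro sum.cong) (auto simp: override_on_def)
  also have "(\<Sum>i\<in>P. override_on a (\<lambda>_. x) P i) = of_nat (card P) * x"
    by (simp add: override_on_def)
  finally show ?thesis by (simp add: add.commute)
qed

lemma collisions_override_on_eq_energy:
  assumes "finite Q" "P \<subseteq> Q"
  shows "collisions (sum_mod N Q \<circ> (\<lambda>a. override_on a (\<lambda>_. x) P)) ((Q - P) \<rightarrow>\<^sub>E L)
      (sum_mod N Q \<circ> (\<lambda>a. override_on a (\<lambda>_. x) P)) ((Q - P) \<rightarrow>\<^sub>E L) = energy N L (Q - P)"
proof -
  have "sum_mod N Q (override_on a (\<lambda>_. x) P) = sum_mod N Q (override_on b (\<lambda>_. x) P)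
      \<longleftrightarrow> sum_mod N (Q - P) a = sum_mod N (Q - P) b" for a b
    unfolding sum_mod_def sum_override_on_const[OF assms] by (simp add: mod_eq_dvd_iff)
  then show ?thesis by (simp add: energy_def collisions_def)
qed

lemma heavy_tuples_subset_UN_override_on:
  assumes "finite Q"
  shows "(Q \<rightarrow>\<^sub>E L) - light_tuples s Q L \<subseteq>
    (\<Union>p\<in>{P. P \<subseteq> Q \<and> card P = Suc s} \<times> L. (\<lambda>a. override_on a (\<lambda>_. snd p) (fst p)) ` ((Q - fst p) \<rightarrow>\<^sub>E L))"
proof
  fix r assume r: "r \<in> (Q \<rightarrow>\<^sub>E L) - light_tuples s Q L"
  then obtain x where "s < occurrences Q r x" by (auto simp: light_tuples_def not_le)
  then have "Suc s \<le> card {i\<in>Q. r i = x}" by (simp add: occurrences_def)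
  then obtain P where P: "P \<subseteq> {i\<in>Q. r i = x}" "card P = Suc s"
    by (rule obtain_subset_with_card_n)
  then have "P \<noteq> {}" by auto
  then obtain i where "i \<in> P" by blast
  then have "x \<in> L" using P(1) r by auto
  then have mem: "(P, x) \<in> {P. P \<subseteq> Q \<and> card P = Suc s} \<times> L" using P by auto
  have rQ: "r \<in> Q \<rightarrow>\<^sub>E L" using r by blast
  have eq: "r = override_on (restrict r (Q - P)) (\<lambda>_. x) P"
  proof
    fix i
    consider "i \<in> P" | "i \<in> Q - P" | "i \<notin> Q" "i \<notin> P" using P(1) by blast
    then show "r i = override_on (restrict r (Q - P)) (\<lambda>_. x) P i"
    proof cases
      case 1
      then have "r i = x" using P(1) by blast
      with 1 show ?thesis by (simp add: override_on_def)
    next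
      case 2
      then show ?thesis by (simp add: override_on_def)
    next
      case 3
      then show ?thesis using PiE_arb[OF rQ] by (simp add: override_on_def)
    qed
  qed
  have "restrict r (Q - P) \<in> (Q - P) \<rightarrow>\<^sub>E L" using rQ by auto
  with eq have "r \<in> (\<lambda>a. override_on a (\<lambda>_. x) P) ` ((Q - P) \<rightarrow>\<^sub>E L)" by (rule image_eqI)
  then have "r \<in> (\<lambda>p. (\<lambda>a. override_on a (\<lambda>_. snd p) (fst p)) ` ((Q - fst p) \<rightarrow>\<^sub>E L)) (P, x)"
    by simp
  then show "r \<in> (\<Union>p\<in>{P. P \<subseteq> Q \<and> card P = Suc s} \<times> L.
      (\<lambda>a. override_on a (\<lambda>_. snd p) (fst p)) ` ((Q - fst p) \<rightarrow>\<^sub>E L))"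
    by (rule UN_I[OF mem])
qed

lemma collisions_heavy_tuples_le:
  assumes fin: "finite Q" "finite L"
    and energy: "\<And>P. P \<subseteq> Q \<Longrightarrow> card P = Suc s \<Longrightarrow> real (energy N L (Q - P)) \<le> B"
  defines "H \<equiv> (Q \<rightarrow>\<^sub>E L) - light_tuples s Q L"
  shows "real (collisions (sum_mod N Q) H (sum_mod N Q) H) \<le> real ((card Q choose Suc s) * card L) ^ 2 * B"
proof -
  define I where "I = {P. P \<subseteq> Q \<and> card P = Suc s} \<times> L"
  define h where "h p = (\<lambda>a. override_on a (\<lambda>_. snd p) (fst p))" for p :: "'a set \<times> int"
  define A where "A p = (Q - fst p) \<rightarrow>\<^sub>E L" for p :: "'a set \<times> int"
  have finI: "finite I" using fin by (auto simp: I_def)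
  have cardI: "card I = (card Q choose Suc s) * card L"
    using n_subsets[OF fin(1)] by (simp add: I_def card_cartesian_product)
  have finA: "finite (A p)" for p using fin by (simp add: A_def finite_PiE)
  have self: "collisions (sum_mod N Q \<circ> h p) (A p) (sum_mod N Q \<circ> h p) (A p) = energy N L (Q - fst p)"
    if "p \<in> I" for p
    using that collisions_override_on_eq_energy[OF fin(1), of "fst p"] by (auto simp: I_def A_def h_def)
  have pair: "real (collisions (sum_mod N Q \<circ> h p) (A p) (sum_mod N Q \<circ> h q) (A q)) \<le> B"
    if "p \<in> I" "q \<in> I" for p q
  proof -
    have "2 * collisions (sum_mod N Q \<circ> h p) (A p) (sum_mod N Q \<circ> h q) (A q)
        \<le> energy N L (Q - fst p) + energy N L (Q - fst q)"
      using collisions_le_mean[OF finA finA, of "sum_mod N Q \<circ> h p" p "sum_mod N Q \<circ> h q" q]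
        self[OF that(1)] self[OF that(2)] by simp
    moreover have "real (energy N L (Q - fst p)) \<le> B" "real (energy N L (Q - fst q)) \<le> B"
      using that energy by (auto simp: I_def)
    ultimately show ?thesis by linarith
  qed
  have "H \<subseteq> (\<Union>p\<in>I. h p ` A p)"
    using heavy_tuples_subset_UN_override_on[OF fin(1)] by (simp add: H_def I_def h_def A_def)
  then have "collisions (sum_mod N Q) H (sum_mod N Q) H
      \<le> collisions (sum_mod N Q) (\<Union>p\<in>I. h p ` A p) (sum_mod N Q) (\<Union>p\<in>I. h p ` A p)"
    using finI finA by (intro collisions_mono) auto
  also have "\<dots> \<le> (\<Sum>p\<in>I. \<Sum>q\<in>I. collisions (sum_mod N Q \<circ> h p) (A p) (sum_mod N Q \<circ> h q) (A q))"
    using finI finA by (rule collisions_UN_image_le)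
  finally have "real (collisions (sum_mod N Q) H (sum_mod N Q) H)
      \<le> (\<Sum>p\<in>I. \<Sum>q\<in>I. real (collisions (sum_mod N Q \<circ> h p) (A p) (sum_mod N Q \<circ> h q) (A q)))"
    by (simp flip: of_nat_sum)
  also have "\<dots> \<le> (\<Sum>p\<in>I. \<Sum>q\<in>I. B)" by (intro sum_mono pair)
  also have "\<dots> = real (card I) ^ 2 * B" by (simp add: power2_eq_square)
  finally show ?thesis unfolding cardI .
qed

lemma energy_le_light_heavy:
  assumes fin: "finite Q" "finite L" and "card Q \<le> k"
    and "\<And>P. P \<subseteq> Q \<Longrightarrow> card P = Suc s \<Longrightarrow> real (energy N L (Q - P)) \<le> B"
  shows "real (energy N L Q) \<le>
    2 * real (card L ^ card Q * card (small_relations N (2 * k) s L) * fact (card Q))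
    + 2 * real ((card Q choose Suc s) * card L) ^ 2 * B"
proof -
  have "light_tuples s Q L \<subseteq> Q \<rightarrow>\<^sub>E L" by (auto simp: light_tuples_def)
  then have "energy N L Q \<le> 2 * collisions (sum_mod N Q) (light_tuples s Q L) (sum_mod N Q) (light_tuples s Q L)
      + 2 * collisions (sum_mod N Q) ((Q \<rightarrow>\<^sub>E L) - light_tuples s Q L) (sum_mod N Q) ((Q \<rightarrow>\<^sub>E L) - light_tuples s Q L)"
    unfolding energy_def using fin by (intro collisions_le_split) (simp_all add: finite_PiE)
  then have "real (energy N L Q) \<le>
      2 * real (collisions (sum_mod N Q) (light_tuples s Q L) (sum_mod N Q) (light_tuples s Q L))
      + 2 * real (collisions (sum_mod N Q) ((Q \<rightarrow>\<^sub>E L) - light_tuples s Q L)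
          (sum_mod N Q) ((Q \<rightarrow>\<^sub>E L) - light_tuples s Q L))"
    by linarith
  moreover have "real (collisions (sum_mod N Q) (light_tuples s Q L) (sum_mod N Q) (light_tuples s Q L))
      \<le> real (card L ^ card Q * card (small_relations N (2 * k) s L) * fact (card Q))"
    using collisions_light_tuples_le[OF fin assms(3)] by (simp only: of_nat_le_iff)
  ultimately show ?thesis using collisions_heavy_tuples_le[where s = s, OF fin assms(4)] by linarith
qed

lemma heavy_term_le:
  fixes m Z \<rho> :: real
  assumes m: "m \<ge> 0" and Z: "Z \<ge> 0" and \<rho>: "\<rho> \<ge> 1" and "s \<ge> 1" and "Suc s \<le> n"
    and key: "2 * real (n choose Suc s) \<le> fact (Suc s) * m ^ (s - 1) * \<rho> ^ Suc s"
  defines "a \<equiv> n - Suc s"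
  shows "(real (n choose Suc s) * m) ^ 2 * (2 * Z * fact a * m ^ a * (real a + 1) * \<rho> ^ a)
    \<le> Z * fact n * m ^ n * \<rho> ^ n * (real a + 1)"
proof -
  define C where "C = real (n choose Suc s)"
  have n: "n = a + Suc s" using assms(5) by (simp add: a_def)
  have "fact (Suc s) * fact a * (n choose Suc s) = (fact n :: nat)"
    using binomial_fact_lemma[of "Suc s" n] assms(5) by (simp add: a_def)
  then have "real (fact (Suc s) * fact a * (n choose Suc s)) = real (fact n)" by (simp only:)
  then have fact_n: "C * fact (Suc s) * fact a = fact n" by (simp only: of_nat_mult of_nat_fact C_def mult_ac)
  have "a + 2 + (s - 1) = n" using \<open>s \<ge> 1\<close> n by simp
  then have pow_m: "m ^ (a + 2) * m ^ (s - 1) = m ^ n" by (simp only: power_add[symmetric])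
  have pow_\<rho>: "\<rho> ^ a * \<rho> ^ Suc s = \<rho> ^ n" using n by (simp only: power_add[symmetric])
  define K where "K = Z * (real a + 1) * m ^ (a + 2) * \<rho> ^ a * (C * fact a)"
  have "K \<ge> 0" using m Z \<rho> by (simp add: K_def C_def)
  have "(C * m) ^ 2 * (2 * Z * fact a * m ^ a * (real a + 1) * \<rho> ^ a) = K * (2 * C)"
    by (simp add: K_def power2_eq_square power_add mult_ac)
  also have "\<dots> \<le> K * (fact (Suc s) * m ^ (s - 1) * \<rho> ^ Suc s)"
    using key \<open>K \<ge> 0\<close> unfolding C_def by (rule mult_left_mono)
  also have "\<dots> = Z * (real a + 1) * (C * fact (Suc s) * fact a) * (m ^ (a + 2) * m ^ (s - 1))
      * (\<rho> ^ a * \<rho> ^ Suc s)"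
    by (simp add: K_def mult_ac)
  also have "\<dots> = Z * fact n * m ^ n * \<rho> ^ n * (real a + 1)"
    by (simp only: fact_n pow_m pow_\<rho>) (simp add: mult_ac)
  finally show ?thesis by (simp add: C_def)
qed

lemma energy_bound_step:
  fixes m Z \<rho> :: real
  assumes m: "m \<ge> 0" and Z: "Z \<ge> 0" and \<rho>: "\<rho> \<ge> 1" and "s \<ge> 1"
    and key: "2 * real (n choose Suc s) \<le> fact (Suc s) * m ^ (s - 1) * \<rho> ^ Suc s"
  defines "a \<equiv> n - Suc s"
  shows "2 * (m ^ n * Z * fact n)
      + 2 * (real (n choose Suc s) * m) ^ 2 * (2 * Z * fact a * m ^ a * (real a + 1) * \<rho> ^ a)
    \<le> 2 * Z * fact n * m ^ n * (real n + 1) * \<rho> ^ n"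
proof -
  define P where "P = Z * fact n * m ^ n * \<rho> ^ n"
  have light: "m ^ n * Z * fact n \<le> P * t" if "t \<ge> 1" for t
  proof -
    have "1 \<le> \<rho> ^ n" using \<rho> by (rule one_le_power)
    also have "\<rho> ^ n * 1 \<le> \<rho> ^ n * t" using that \<rho> by (intro mult_left_mono) simp_all
    finally have "(Z * fact n * m ^ n) * 1 \<le> (Z * fact n * m ^ n) * (\<rho> ^ n * t)"
      using m Z by (intro mult_left_mono) simp_all
    then show ?thesis by (simp add: P_def mult_ac)
  qed
  show ?thesis
  proof (cases "n < Suc s")
    case True
    then have "real (n choose Suc s) = 0" by (simp add: binomial_eq_0)
    then have "2 * (m ^ n * Z * fact n)
        + 2 * (real (n choose Suc s) * m) ^ 2 * (2 * Z * fact a * m ^ a * (real a + 1) * \<rho> ^ a)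
      = 2 * (m ^ n * Z * fact n)" by simp
    also have "\<dots> \<le> 2 * (P * (real n + 1))" using light[of "real n + 1"] by simp
    finally show ?thesis by (simp add: P_def mult_ac)
  next
    case False
    then have "P * (real s + 1) + P * (real a + 1) = P * (real n + 1)"
      by (simp add: a_def algebra_simps)
    then show ?thesis
      using light[of "real s + 1"] heavy_term_le[OF m Z \<rho> \<open>s \<ge> 1\<close> _ key] False
      by (simp add: a_def P_def mult_ac)
  qed
qed

lemma energy_le_bound:
  fixes \<rho> Z :: real
  assumes L: "finite L" and \<rho>: "\<rho> \<ge> 1" and "s \<ge> 1"
    and Z: "real (card (small_relations N (2 * k) s L)) \<le> Z"
    and key: "\<And>n. n \<le> k \<Longrightarrow> 2 * real (n choose Suc s) \<le> fact (Suc s) * real (card L) ^ (s - 1) * \<rho> ^ Suc s"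
    and "finite Q" "card Q \<le> k"
  shows "real (energy N L Q)
    \<le> 2 * Z * fact (card Q) * real (card L) ^ card Q * (real (card Q) + 1) * \<rho> ^ card Q"
  using assms(6,7)
proof (induction "card Q" arbitrary: Q rule: less_induct)
  case less
  define n where "n = card Q"
  define m where "m = real (card L)"
  define a where "a = n - Suc s"
  define B where "B = 2 * Z * fact a * m ^ a * (real a + 1) * \<rho> ^ a"
  have "real (energy N L (Q - P)) \<le> B" if "P \<subseteq> Q" "card P = Suc s" for P
  proof -
    have "finite P" using less.prems(1) that(1) finite_subset by blast
    then have "card (Q - P) = a" using that less.prems(1) by (simp add: card_Diff_subset a_def n_def)
    moreover have "a < card Q" using that less.prems(1) card_mono[of Q P] by (simp add: a_def n_def)
    ultimately show ?thesis
      using less.hyps[of "Q - P"] less.prems by (simp add: B_def m_def)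
  qed
  then have "real (energy N L Q) \<le> 2 * real (card L ^ n * card (small_relations N (2 * k) s L) * fact n)
      + 2 * real ((n choose Suc s) * card L) ^ 2 * B"
    unfolding n_def by (rule energy_le_light_heavy[OF less.prems(1) L less.prems(2)])
  also have "\<dots> \<le> 2 * (m ^ n * Z * fact n) + 2 * (real (n choose Suc s) * m) ^ 2 * B"
    using Z by (simp add: m_def mult_right_mono mult_left_mono)
  also have "\<dots> \<le> 2 * Z * fact n * m ^ n * (real n + 1) * \<rho> ^ n"
    unfolding B_def a_def
    using Z \<rho> \<open>s \<ge> 1\<close> key[of n] less.prems(2) by (intro energy_bound_step) (simp_all add: m_def n_def)
  finally show ?case by (simp add: m_def n_def)
qed

lemma balance_le_exponent:
  fixes L M :: real and s :: nat
  assumes L: "L \<ge> 0" and M: "M \<ge> 0" and s: "s \<ge> 3"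
  shows "L - (real s - 1) / (real s + 1) * M \<le> 2 * real s * L\<^sup>2 / (2 * real s * L + (real s - 2) * M)"
proof (cases "L = 0")
  case True
  then show ?thesis using M s by simp
next
  case False
  define \<alpha> where "\<alpha> = (real s - 1) / (real s + 1)"
  define D where "D = 2 * real s * L + (real s - 2) * M"
  have "D > 0" using False L M s by (simp add: D_def add_pos_nonneg)
  have "\<alpha> \<ge> 0" using s by (simp add: \<alpha>_def)
  have "real s \<le> real s * real s" using s mult_left_mono[of 1 "real s" "real s"] by simp
  moreover have "2 * real s * (real s - 1) - (real s - 2) * (real s + 1) = real s * real s - real s + 2"
    by (simp add: algebra_simps)
  ultimately have "(real s - 2) * (real s + 1) \<le> 2 * real s * (real s - 1)" by linarith
  then have gap: "real s - 2 - 2 * real s * \<alpha> \<le> 0" using s by (simp add: \<alpha>_def field_simps)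
  have "(L - \<alpha> * M) * D = 2 * real s * L\<^sup>2 + (real s - 2 - 2 * real s * \<alpha>) * (L * M) - \<alpha> * (real s - 2) * M\<^sup>2"
    by (simp add: D_def algebra_simps power2_eq_square)
  also have "\<dots> \<le> 2 * real s * L\<^sup>2"
  proof -
    have "(real s - 2 - 2 * real s * \<alpha>) * (L * M) \<le> 0" using gap L M by (simp add: mult_nonpos_nonneg)
    moreover have "\<alpha> * (real s - 2) * M\<^sup>2 \<ge> 0" using \<open>\<alpha> \<ge> 0\<close> s by simp
    ultimately show ?thesis by linarith
  qed
  finally show ?thesis using \<open>D > 0\<close> by (simp add: pos_le_divide_eq \<alpha>_def D_def)
qed

lemma pow_eq_balanced_pow:
  fixes k m :: real
  assumes "m > 0" "s \<ge> 1"
  shows "k ^ Suc s = (k * m powr (- ((real s - 1) / (real s + 1)))) ^ Suc s * m ^ (s - 1)"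
proof -
  define \<alpha> where "\<alpha> = (real s - 1) / (real s + 1)"
  have "real (Suc s) * - \<alpha> = - (real s - 1)" by (simp add: \<alpha>_def field_simps)
  moreover have "m ^ (s - 1) = m powr (real s - 1)"
    using assms by (simp add: powr_realpow[symmetric] of_nat_diff)
  ultimately have "m powr (real (Suc s) * - \<alpha>) * m ^ (s - 1) = 1"
    using assms(1) by (simp add: powr_add[symmetric])
  moreover have "(m powr (- \<alpha>)) ^ Suc s = m powr (real (Suc s) * - \<alpha>)"
    by (rule powr_power) (use assms(1) in simp)
  ultimately show ?thesis unfolding \<alpha>_def[symmetric]
    by (simp only: power_mult_distrib mult.assoc mult_1_right)
qed

lemma balanced_le_powr:
  assumes k: "k \<ge> 1" and m: "m \<ge> 1" and s: "s \<ge> 3"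
  shows "real k * real m powr (- ((real s - 1) / (real s + 1)))
    \<le> 2 powr (2 * real s * (log 2 (real k))\<^sup>2 / log 2 (real k ^ (2 * s) * real m ^ (s - 2)))"
proof -
  define \<alpha> where "\<alpha> = (real s - 1) / (real s + 1)"
  define LL where "LL = log 2 (real k)"
  define MM where "MM = log 2 (real m)"
  have km: "real k > 0" "real m > 0" using k m by simp_all
  have LM: "LL \<ge> 0" "MM \<ge> 0" using k m by (simp_all add: LL_def MM_def)
  have "real k = 2 powr LL" "real m = 2 powr MM" using km by (simp_all add: LL_def MM_def)
  then have "real k * real m powr (- \<alpha>) = 2 powr LL * 2 powr (MM * - \<alpha>)"
    by (simp only: powr_powr)
  also have "\<dots> = 2 powr (LL - \<alpha> * MM)" by (simp add: powr_add[symmetric] algebra_simps)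
  also have "\<dots> \<le> 2 powr (2 * real s * LL\<^sup>2 / (2 * real s * LL + (real s - 2) * MM))"
    unfolding \<alpha>_def using balance_le_exponent[OF LM s] by simp
  also have "2 * real s * LL + (real s - 2) * MM = log 2 (real k ^ (2 * s) * real m ^ (s - 2))"
    using km s by (simp add: log_mult log_nat_power LL_def MM_def of_nat_diff)
  finally show ?thesis by (simp add: \<alpha>_def LL_def)
qed

lemma balancing_parameter_exists:
  assumes "k \<ge> 1" "m \<ge> 1" "s \<ge> 3"
  obtains \<rho> :: real where "\<rho> \<ge> 1" "real k ^ Suc s \<le> real m ^ (s - 1) * \<rho> ^ Suc s"
    "\<rho> ^ k \<le> 2 powr (2 * real s * real k * (log 2 (real k))\<^sup>2 /
                       log 2 (real k ^ (2 * s) * real m ^ (s - 2)))"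
proof
  define e where "e = 2 * real s * (log 2 (real k))\<^sup>2 / log 2 (real k ^ (2 * s) * real m ^ (s - 2))"
  define \<rho> where "\<rho> = max 1 (real k * real m powr (- ((real s - 1) / (real s + 1))))"
  show "\<rho> \<ge> 1" by (simp add: \<rho>_def)
  have "real k ^ Suc s = (real k * real m powr (- ((real s - 1) / (real s + 1)))) ^ Suc s * real m ^ (s - 1)"
    using assms by (intro pow_eq_balanced_pow) simp_all
  also have "\<dots> \<le> \<rho> ^ Suc s * real m ^ (s - 1)"
    by (intro mult_right_mono power_mono) (simp_all add: \<rho>_def)
  finally show "real k ^ Suc s \<le> real m ^ (s - 1) * \<rho> ^ Suc s" by (simp add: mult.commute)
  have "1 * 1 \<le> real k ^ (2 * s) * real m ^ (s - 2)"
    using assms by (intro mult_mono one_le_power) simp_all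
  then have "e \<ge> 0" using assms by (simp add: e_def)
  then have "\<rho> \<le> 2 powr e"
    using balanced_le_powr[OF assms] ge_one_powr_ge_zero[of 2 e] by (simp add: \<rho>_def e_def)
  then have "\<rho> ^ k \<le> (2 powr e) ^ k" by (rule power_mono) (simp add: \<rho>_def)
  also have "\<dots> = 2 powr (real k * e)" by (simp add: powr_power mult.commute)
  finally show "\<rho> ^ k \<le> 2 powr (2 * real s * real k * (log 2 (real k))\<^sup>2 /
                       log 2 (real k ^ (2 * s) * real m ^ (s - 2)))"
    by (simp add: e_def mult_ac)
qed

lemma two_binomial_le:
  fixes \<rho> :: real
  assumes "n \<le> k" "s \<ge> 1" "real k ^ Suc s \<le> real m ^ (s - 1) * \<rho> ^ Suc s"
  shows "2 * real (n choose Suc s) \<le> fact (Suc s) * real m ^ (s - 1) * \<rho> ^ Suc s"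
proof -
  have "n choose Suc s \<le> n ^ Suc s"
  proof (cases "Suc s \<le> n")
    case True
    then show ?thesis by (rule binomial_le_pow)
  qed (simp add: binomial_eq_0)
  also have "\<dots> \<le> k ^ Suc s" using assms(1) by (rule power_mono) simp
  finally have "real (n choose Suc s) \<le> real (k ^ Suc s)" by (rule of_nat_mono)
  moreover have "(2 :: real) \<le> fact (Suc s)"
    using fact_mono[of 2 "Suc s"] assms(2) by (simp add: numeral_2_eq_2)
  ultimately have "2 * real (n choose Suc s) \<le> fact (Suc s) * real k ^ Suc s"
    by (intro mult_mono) (simp_all only: of_nat_power of_nat_0_le_iff fact_ge_zero)
  also have "\<dots> \<le> fact (Suc s) * (real m ^ (s - 1) * \<rho> ^ Suc s)"
    using assms(3) by (rule mult_left_mono) simp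
  finally show ?thesis by (simp add: mult.assoc)
qed

lemma double_Suc_pow_le:
  fixes s d :: nat
  shows "(2 * s + 1) ^ (d - 1) \<le> (s + 1) ^ (2 * d)"
proof -
  have "(2 * s + 1) ^ (d - 1) \<le> (2 * s + 1) ^ d" by (rule power_increasing) simp_all
  also have "\<dots> \<le> ((s + 1) ^ 2) ^ d" by (rule power_mono) (simp_all add: power2_eq_square)
  finally show ?thesis by (simp only: power_mult)
qed

lemma energy_bound_le_coarse:
  fixes Z m \<rho> E :: real
  assumes "k \<ge> 1" "Z \<ge> 0" "m \<ge> 0" "\<rho> \<ge> 1" "\<rho> ^ k \<le> E"
  shows "2 * Z * fact k * m ^ k * (real k + 1) * \<rho> ^ k \<le> 2 ^ (9 * k) * real k ^ k * m ^ k * Z * E"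
proof -
  have "k + 1 \<le> 2 ^ k" using less_exp[of k] by (simp add: Suc_le_eq)
  then have "2 * (k + 1) \<le> (2::nat) ^ (k + 1)" by simp
  also have "\<dots> \<le> 2 ^ (9 * k)" using assms(1) by (intro power_increasing) simp_all
  finally have "real (2 * (k + 1)) \<le> real ((2::nat) ^ (9 * k))" by (rule of_nat_mono)
  then have "2 * (real k + 1) \<le> 2 ^ (9 * k)" by simp
  moreover have "(fact k :: real) \<le> real k ^ k" using fact_le_power[of k] by (simp flip: of_nat_power)
  ultimately have "(2 * (real k + 1)) * fact k * (m ^ k * Z) * \<rho> ^ k \<le> 2 ^ (9 * k) * real k ^ k * (m ^ k * Z) * E"
    using assms by (intro mult_mono) simp_all
  then show ?thesis by (simp only: mult_ac)
qed

theorem mainTheorem6: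
  fixes N k s d :: nat and Lam :: "int set"
  assumes "k \<ge> 1" and "d \<ge> 1" and "s \<ge> 3"
    and "prime N" and "N \<ge> s + 1"
    and "in_Lambda_family N d (2 * k) s Lam"
  shows "real (T_k N k Lam) \<le>
    2 ^ (9 * k) * real k ^ k * real (card Lam) ^ k * real (s + 1) ^ (2 * d) *
    2 powr (2 * real s * real k * (log 2 (real k))\<^sup>2 /
            log 2 (real k ^ (2 * s) * real (card Lam) ^ (s - 2)))"
proof (cases "Lam = {}")
  case True
  then have "{..<k} \<rightarrow>\<^sub>E Lam = {}" using assms(1) by (auto simp: PiE_eq_empty_iff intro: exI[of _ 0])
  then have "T_k N k Lam = 0" by (simp add: T_k_eq_energy energy_def collisions_def)
  then show ?thesis using True assms(1) by simp
next
  case False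
  have finL: "finite Lam" using assms(6) by (rule finite_if_in_Lambda_family)
  then have "card Lam \<ge> 1" using False by (simp add: Suc_le_eq card_gt_0_iff)
  then obtain \<rho> where \<rho>: "\<rho> \<ge> 1" "real k ^ Suc s \<le> real (card Lam) ^ (s - 1) * \<rho> ^ Suc s"
    "\<rho> ^ k \<le> 2 powr (2 * real s * real k * (log 2 (real k))\<^sup>2 /
                       log 2 (real k ^ (2 * s) * real (card Lam) ^ (s - 2)))"
    using balancing_parameter_exists assms(1,3) by blast
  have "real (card (small_relations N (2 * k) s Lam)) \<le> real (s + 1) ^ (2 * d)"
    using order_trans[OF card_small_relations_le[OF assms(6,2)] double_Suc_pow_le]
    by (simp only: of_nat_le_iff flip: of_nat_power)
  then have "real (T_k N k Lam)
      \<le> 2 * real (s + 1) ^ (2 * d) * fact k * real (card Lam) ^ k * (real k + 1) * \<rho> ^ k"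
    using energy_le_bound[OF finL \<rho>(1), of s N k "real (s + 1) ^ (2 * d)" "{..<k}"]
      two_binomial_le[OF _ _ \<rho>(2)] assms(3) by (simp add: T_k_eq_energy)
  also have "\<dots> \<le> 2 ^ (9 * k) * real k ^ k * real (card Lam) ^ k * real (s + 1) ^ (2 * d) *
    2 powr (2 * real s * real k * (log 2 (real k))\<^sup>2 /
            log 2 (real k ^ (2 * s) * real (card Lam) ^ (s - 2)))"
    using energy_bound_le_coarse[OF assms(1) _ _ \<rho>(1,3)] by simp
  finally show ?thesis .
qed

end
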